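(* Let $k$ be a field of characteristic $0$, $R=k[x_1,\dots,x_n]$ acting on $S=k[X_1,\dots,X_n]$ by differentiation, and let $\ell\in R_1$. Let $F\in S$ be a homogeneous form such that $R/\operatorname{Ann}(F)$ has the strong Lefschetz property with $\ell$ as a strong Lefschetz element. Then for every $d>0$, the Artinian Gorenstein algebra $R/\operatorname{Ann}(\ell^d\circ F)$ has the strong Lefschetz property.
   Context: $R$ acts on $S$ by $x_i\circ F=\partial F/\partial X_i$, and $\operatorname{Ann}(F)=\{g\in R\mid g\circ F=0\}$. A graded Artinian $k$-algebra $A$ has the strong Lefschetz property, with strong Lefschetz element $\ell\in A_1$, if for all $i$ and $j\ge0$ the multiplication map $\cdot\ell^j\colon A_i\to A_{i+j}$ is injective or surjective. *)

theory Defs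
  imports Main "HOL-Library.Poly_Mapping"
begin

text \<open>Both R = k[x_v] and S = k[X_v] are
  modelled by this type.\<close>

type_synonym ('v, 'a) mpoly = "('v \<Rightarrow>\<^sub>0 nat) \<Rightarrow>\<^sub>0 'a"

definition mdeg :: "('v::finite \<Rightarrow>\<^sub>0 nat) \<Rightarrow> nat" where
  "mdeg m = (\<Sum>i\<in>UNIV. Poly_Mapping.lookup m i)"

text \<open>p is a homogeneous form of degree d (the zero polynomial counts as
  homogeneous of every degree, so R_d = {p. homog d p}).\<close>
definition homog :: "nat \<Rightarrow> ('v::finite, 'a::zero) mpoly \<Rightarrow> bool" where
  "homog d p \<longleftrightarrow> (\<forall>m\<in>Poly_Mapping.keys p. mdeg m = d)"

definition pderiv_mp :: "'v \<Rightarrow> ('v, 'a::comm_ring_1) mpoly \<Rightarrow> ('v, 'a) mpoly" where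
  "pderiv_mp i F = (\<Sum>m\<in>Poly_Mapping.keys F.
      Poly_Mapping.single (m - Poly_Mapping.single i 1) (of_nat (Poly_Mapping.lookup m i) * Poly_Mapping.lookup F m))"

text \<open>The monomial x^m acts as the differential operator
  prod_i (d/dX_i)^(m_i).\<close>
definition diff_mono :: "('v::{finite,linorder} \<Rightarrow>\<^sub>0 nat) \<Rightarrow> ('v, 'a::comm_ring_1) mpoly \<Rightarrow> ('v, 'a) mpoly" where
  "diff_mono m = foldr (\<lambda>i f. (pderiv_mp i ^^ Poly_Mapping.lookup m i) \<circ> f) (sorted_list_of_set UNIV) id"

definition act :: "('v::{finite,linorder}, 'a::comm_ring_1) mpoly \<Rightarrow> ('v, 'a) mpoly \<Rightarrow> ('v, 'a) mpoly" where
  "act g F = (\<Sum>m\<in>Poly_Mapping.keys g. Poly_Mapping.single 0 (Poly_Mapping.lookup g m) * diff_mono m F)"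

definition Ann :: "('v::{finite,linorder}, 'a::comm_ring_1) mpoly \<Rightarrow> ('v, 'a) mpoly set" where
  "Ann F = {g. act g F = 0}"

text \<open>l (a linear form in R_1, representing its class in A_1) is a strong Lefschetz
  element of the graded Artinian algebra A = R/Ann(F), where A_i = R_i/Ann(F)_i
  (Ann(F) is a homogeneous ideal): for all i, j, multiplication by l^j from A_i to
  A_(i+j) is injective or surjective.\<close>
definition strong_lefschetz_elem :: "('v::{finite,linorder}, 'a::comm_ring_1) mpoly \<Rightarrow> ('v, 'a) mpoly \<Rightarrow> bool" where
  "strong_lefschetz_elem F l \<longleftrightarrow> homog 1 l \<and>
     (\<forall>i j::nat.
        (\<forall>g. homog i g \<and> l ^ j * g \<in> Ann F \<longrightarrow> g \<in> Ann F)
      \<or> (\<forall>h. homog (i + j) h \<longrightarrow> (\<exists>g. homog i g \<and> h - l ^ j * g \<in> Ann F)))"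

definition has_SLP :: "('v::{finite,linorder}, 'a::comm_ring_1) mpoly \<Rightarrow> bool" where
  "has_SLP F \<longleftrightarrow> (\<exists>l. strong_lefschetz_elem F l)"

end

theory Submission
  imports Defs
begin

text \<open>The differentiation action makes S a module over R: (g h) \<circ> F = g \<circ> (h \<circ> F).
  Consequently Ann(h \<circ> F) = (Ann F : h), so for G = l^d \<circ> F we have
  l^j g \<in> Ann G iff l^(j+d) g \<in> Ann F. Multiplication by l^j on (R/Ann G)_i is thus
  injective (surjective) as soon as multiplication by l^(j+d) on (R/Ann F)_i is, and the
  strong Lefschetz property passes from R/Ann F to R/Ann G with the same element l.\<close>

lemma lookup_single_0_mult:
  "Poly_Mapping.lookup (Poly_Mapping.single 0 c * p) n = c * Poly_Mapping.lookup p n"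
  by (simp add: mult_map_scale_conv_mult[symmetric] map.rep_eq when_def)

lemma diff_single_eq_iff:
  fixes m n :: "'v \<Rightarrow>\<^sub>0 nat"
  assumes "Poly_Mapping.lookup m i \<noteq> 0"
  shows "m - Poly_Mapping.single i 1 = n \<longleftrightarrow> m = n + Poly_Mapping.single i 1"
proof
  assume eq: "m - Poly_Mapping.single i 1 = n"
  show "m = n + Poly_Mapping.single i 1"
  proof (rule poly_mapping_eqI)
    fix x
    have "Poly_Mapping.lookup (m - Poly_Mapping.single i 1) x = Poly_Mapping.lookup n x"
      using eq by simp
    then show "Poly_Mapping.lookup m x = Poly_Mapping.lookup (n + Poly_Mapping.single i 1) x"
      using assms by (cases "x = i") (auto simp: lookup_add lookup_minus lookup_single)
  qed
qed (auto simp: poly_mapping_eq_iff fun_eq_iff lookup_add lookup_minus lookup_single when_def)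

lemma lookup_pderiv_mp:
  fixes F :: "('v, 'a::comm_ring_1) mpoly"
  shows "Poly_Mapping.lookup (pderiv_mp i F) n
    = of_nat (Poly_Mapping.lookup n i + 1) * Poly_Mapping.lookup F (n + Poly_Mapping.single i 1)"
proof -
  let ?e = "Poly_Mapping.single i (1::nat)"
  let ?c = "\<lambda>m. of_nat (Poly_Mapping.lookup m i) * Poly_Mapping.lookup F m"
  have "Poly_Mapping.lookup (pderiv_mp i F) n = (\<Sum>m\<in>Poly_Mapping.keys F. ?c m when m - ?e = n)"
    unfolding pderiv_mp_def lookup_sum lookup_single by simp
  also have "\<dots> = (\<Sum>m\<in>Poly_Mapping.keys F. ?c m when m = n + ?e)"
  proof (rule sum.cong[OF refl])
    fix m
    show "(?c m when m - ?e = n) = (?c m when m = n + ?e)"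
      using diff_single_eq_iff[of m i n] by (cases "Poly_Mapping.lookup m i = 0") auto
  qed
  also have "\<dots> = ?c (n + ?e)"
    by (cases "n + ?e \<in> Poly_Mapping.keys F") (auto simp: when_def in_keys_iff)
  finally show ?thesis
    by (simp add: lookup_add)
qed

lemma lookup_pderiv_mp_funpow:
  fixes F :: "('v, 'a::comm_ring_1) mpoly"
  shows "Poly_Mapping.lookup ((pderiv_mp i ^^ k) F) n
    = pochhammer (of_nat (Poly_Mapping.lookup n i + 1)) k * Poly_Mapping.lookup F (n + Poly_Mapping.single i k)"
proof (induction k arbitrary: n)
  case 0
  then show ?case by simp
next
  case (Suc k)
  have "Poly_Mapping.lookup ((pderiv_mp i ^^ Suc k) F) n
     = of_nat (Poly_Mapping.lookup n i + 1)
       * Poly_Mapping.lookup ((pderiv_mp i ^^ k) F) (n + Poly_Mapping.single i 1)"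
    by (simp add: lookup_pderiv_mp)
  also have "\<dots> = of_nat (Poly_Mapping.lookup n i + 1)
       * (pochhammer (of_nat (Poly_Mapping.lookup n i + 1) + 1) k
          * Poly_Mapping.lookup F (n + Poly_Mapping.single i (Suc k)))"
    by (simp add: Suc.IH lookup_add add.assoc single_add[symmetric] add_ac)
  also have "\<dots> = pochhammer (of_nat (Poly_Mapping.lookup n i + 1)) (Suc k)
       * Poly_Mapping.lookup F (n + Poly_Mapping.single i (Suc k))"
    by (simp add: pochhammer_rec mult.assoc)
  finally show ?case .
qed

text \<open>The rising factorial product (n+m)!/n!, i.e. the coefficient of X^n in x^m \<circ> X^(n+m).\<close>

definition diff_coeff :: "('v::finite \<Rightarrow>\<^sub>0 nat) \<Rightarrow> ('v \<Rightarrow>\<^sub>0 nat) \<Rightarrow> 'a::comm_ring_1" where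
  "diff_coeff m n = (\<Prod>i\<in>UNIV. pochhammer (of_nat (Poly_Mapping.lookup n i + 1)) (Poly_Mapping.lookup m i))"

lemma diff_coeff_add:
  "(diff_coeff (m + m') n :: 'a::comm_ring_1) = diff_coeff m n * diff_coeff m' (n + m)"
  unfolding diff_coeff_def prod.distrib[symmetric]
  by (rule prod.cong[OF refl]) (simp add: lookup_add pochhammer_product' add_ac)

lemma lookup_foldr_pderiv_mp:
  fixes F :: "('v, 'a::comm_ring_1) mpoly"
  assumes "distinct xs"
  shows "Poly_Mapping.lookup (foldr (\<lambda>i f. (pderiv_mp i ^^ Poly_Mapping.lookup m i) \<circ> f) xs id F) n
    = (\<Prod>i\<in>set xs. pochhammer (of_nat (Poly_Mapping.lookup n i + 1)) (Poly_Mapping.lookup m i))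
      * Poly_Mapping.lookup F (n + (\<Sum>i\<in>set xs. Poly_Mapping.single i (Poly_Mapping.lookup m i)))"
  using assms
proof (induction xs arbitrary: n)
  case Nil
  then show ?case by simp
next
  case (Cons x xs)
  let ?n = "n + Poly_Mapping.single x (Poly_Mapping.lookup m x)"
  have shift: "(\<Prod>i\<in>set xs. pochhammer (of_nat (Poly_Mapping.lookup ?n i + 1)) (Poly_Mapping.lookup m i))
      = (\<Prod>i\<in>set xs. pochhammer (of_nat (Poly_Mapping.lookup n i + 1)) (Poly_Mapping.lookup m i))"
    using Cons.prems by (intro prod.cong refl) (auto simp: lookup_add lookup_single when_def)
  have "Poly_Mapping.lookup (foldr (\<lambda>i f. (pderiv_mp i ^^ Poly_Mapping.lookup m i) \<circ> f) (x # xs) id F) n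
    = pochhammer (of_nat (Poly_Mapping.lookup n x + 1)) (Poly_Mapping.lookup m x)
      * Poly_Mapping.lookup (foldr (\<lambda>i f. (pderiv_mp i ^^ Poly_Mapping.lookup m i) \<circ> f) xs id F) ?n"
    by (simp add: lookup_pderiv_mp_funpow)
  also have "\<dots> = pochhammer (of_nat (Poly_Mapping.lookup n x + 1)) (Poly_Mapping.lookup m x)
      * ((\<Prod>i\<in>set xs. pochhammer (of_nat (Poly_Mapping.lookup n i + 1)) (Poly_Mapping.lookup m i))
      * Poly_Mapping.lookup F (?n + (\<Sum>i\<in>set xs. Poly_Mapping.single i (Poly_Mapping.lookup m i))))"
    using Cons by (simp only: Cons.IH shift distinct.simps)
  also have "\<dots> = (\<Prod>i\<in>set (x # xs). pochhammer (of_nat (Poly_Mapping.lookup n i + 1)) (Poly_Mapping.lookup m i))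
      * Poly_Mapping.lookup F (n + (\<Sum>i\<in>set (x # xs). Poly_Mapping.single i (Poly_Mapping.lookup m i)))"
    using Cons.prems by (simp add: add.assoc mult.assoc)
  finally show ?case .
qed

lemma lookup_diff_mono:
  fixes F :: "('v::{finite,linorder}, 'a::comm_ring_1) mpoly"
  shows "Poly_Mapping.lookup (diff_mono m F) n = diff_coeff m n * Poly_Mapping.lookup F (n + m)"
proof -
  have "(\<Sum>i\<in>UNIV. Poly_Mapping.single i (Poly_Mapping.lookup m i)) = m"
    by (rule poly_mapping_eqI) (simp add: lookup_sum lookup_single when_def)
  then show ?thesis
    by (simp add: diff_mono_def lookup_foldr_pderiv_mp diff_coeff_def)
qed

lemma diff_mono_add:
  fixes F :: "('v::{finite,linorder}, 'a::comm_ring_1) mpoly"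
  shows "diff_mono (m + m') F = diff_mono m (diff_mono m' F)"
  by (rule poly_mapping_eqI) (simp add: lookup_diff_mono diff_coeff_add add_ac mult_ac)

lemma diff_mono_plus:
  fixes F G :: "('v::{finite,linorder}, 'a::comm_ring_1) mpoly"
  shows "diff_mono m (F + G) = diff_mono m F + diff_mono m G"
  by (rule poly_mapping_eqI) (simp add: lookup_diff_mono lookup_add distrib_left)

lemma diff_mono_zero:
  "diff_mono m (0 :: ('v::{finite,linorder}, 'a::comm_ring_1) mpoly) = 0"
  by (rule poly_mapping_eqI) (simp add: lookup_diff_mono)

lemma diff_mono_sum:
  fixes F :: "'b \<Rightarrow> ('v::{finite,linorder}, 'a::comm_ring_1) mpoly"
  shows "diff_mono m (\<Sum>x\<in>A. F x) = (\<Sum>x\<in>A. diff_mono m (F x))"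
  by (induction A rule: infinite_finite_induct) (simp_all add: diff_mono_zero diff_mono_plus)

lemma diff_mono_single_0_mult:
  fixes F :: "('v::{finite,linorder}, 'a::comm_ring_1) mpoly"
  shows "diff_mono m (Poly_Mapping.single 0 c * F) = Poly_Mapping.single 0 c * diff_mono m F"
  by (rule poly_mapping_eqI) (simp only: lookup_diff_mono lookup_single_0_mult mult.left_commute)

lemma act_eq_sum_superset:
  fixes F :: "('v::{finite,linorder}, 'a::comm_ring_1) mpoly"
  assumes "finite M" "Poly_Mapping.keys g \<subseteq> M"
  shows "act g F = (\<Sum>m\<in>M. Poly_Mapping.single 0 (Poly_Mapping.lookup g m) * diff_mono m F)"
  unfolding act_def
  by (rule sum.mono_neutral_left) (use assms in \<open>auto simp: in_keys_iff\<close>)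

lemma act_add:
  fixes F :: "('v::{finite,linorder}, 'a::comm_ring_1) mpoly"
  shows "act (g + h) F = act g F + act h F"
proof -
  let ?M = "Poly_Mapping.keys g \<union> Poly_Mapping.keys h"
  have M: "finite ?M" by simp
  have "act (g + h) F = (\<Sum>m\<in>?M. Poly_Mapping.single 0 (Poly_Mapping.lookup (g + h) m) * diff_mono m F)"
    by (rule act_eq_sum_superset[OF M keys_add])
  also have "\<dots> = act g F + act h F"
    by (simp add: act_eq_sum_superset[OF M] lookup_add single_add distrib_right sum.distrib)
  finally show ?thesis .
qed

lemma act_zero: "act 0 (F :: ('v::{finite,linorder}, 'a::comm_ring_1) mpoly) = 0"
  by (simp add: act_def)

lemma act_zero_right: "act g (0 :: ('v::{finite,linorder}, 'a::comm_ring_1) mpoly) = 0"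
  by (simp add: act_def diff_mono_zero)

lemma act_sum:
  fixes F :: "('v::{finite,linorder}, 'a::comm_ring_1) mpoly"
  shows "act (\<Sum>x\<in>A. g x) F = (\<Sum>x\<in>A. act (g x) F)"
  by (induction A rule: infinite_finite_induct) (simp_all add: act_zero act_add)

lemma act_single:
  fixes F :: "('v::{finite,linorder}, 'a::comm_ring_1) mpoly"
  shows "act (Poly_Mapping.single m c) F = Poly_Mapping.single 0 c * diff_mono m F"
  by (subst act_eq_sum_superset[of "{m}"]) auto

lemma sum_keys_single_lookup:
  "(\<Sum>m\<in>Poly_Mapping.keys p. Poly_Mapping.single m (Poly_Mapping.lookup p m)) = p"
  by (rule poly_mapping_eqI) (simp add: lookup_sum lookup_single when_def in_keys_iff)

lemma act_single_mult:
  fixes F :: "('v::{finite,linorder}, 'a::comm_ring_1) mpoly"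
  shows "act (Poly_Mapping.single m c * h) F = act (Poly_Mapping.single m c) (act h F)"
proof -
  have "act (Poly_Mapping.single m c * h) F
     = act (\<Sum>m'\<in>Poly_Mapping.keys h. Poly_Mapping.single (m + m') (c * Poly_Mapping.lookup h m')) F"
    by (subst (1) sum_keys_single_lookup[of h, symmetric]) (simp add: sum_distrib_left mult_single)
  also have "\<dots> = (\<Sum>m'\<in>Poly_Mapping.keys h. Poly_Mapping.single 0 c
       * (Poly_Mapping.single 0 (Poly_Mapping.lookup h m') * diff_mono m (diff_mono m' F)))"
  proof -
    have "Poly_Mapping.single 0 (c * Poly_Mapping.lookup h m')
        = Poly_Mapping.single 0 c * Poly_Mapping.single (0::'v \<Rightarrow>\<^sub>0 nat) (Poly_Mapping.lookup h m')" for m'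
      by (simp add: mult_single)
    then show ?thesis
      by (simp add: act_sum act_single diff_mono_add mult.assoc)
  qed
  also have "\<dots> = act (Poly_Mapping.single m c) (act h F)"
    by (simp add: act_single act_def[of h] diff_mono_sum diff_mono_single_0_mult sum_distrib_left)
  finally show ?thesis .
qed

lemma act_mult:
  fixes F :: "('v::{finite,linorder}, 'a::comm_ring_1) mpoly"
  shows "act (g * h) F = act g (act h F)"
proof -
  have "act (g * h) F = act (\<Sum>m\<in>Poly_Mapping.keys g. Poly_Mapping.single m (Poly_Mapping.lookup g m) * h) F"
    by (subst (1) sum_keys_single_lookup[of g, symmetric]) (simp add: sum_distrib_right)
  also have "\<dots> = act g (act h F)"
    by (simp add: act_sum act_single_mult act_single act_def[of g])
  finally show ?thesis .
qed

lemma Ann_act: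
  fixes F :: "('v::{finite,linorder}, 'a::comm_ring_1) mpoly"
  shows "g \<in> Ann (act h F) \<longleftrightarrow> g * h \<in> Ann F"
  by (simp add: Ann_def act_mult)

lemma mdeg_add: "mdeg (m + m') = mdeg m + mdeg m'"
  by (simp add: mdeg_def lookup_add sum.distrib)

lemma homog_mult:
  fixes p q :: "('v::finite, 'a::comm_ring_1) mpoly"
  assumes "homog a p" "homog b q"
  shows "homog (a + b) (p * q)"
  unfolding homog_def
proof
  fix m assume "m \<in> Poly_Mapping.keys (p * q)"
  then obtain x y where "m = x + y" "x \<in> Poly_Mapping.keys p" "y \<in> Poly_Mapping.keys q"
    using keys_mult by blast
  then show "mdeg m = a + b" using assms by (simp add: homog_def mdeg_add)
qed

lemma homog_power:
  fixes l :: "('v::finite, 'a::comm_ring_1) mpoly"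
  assumes "homog 1 l"
  shows "homog k (l ^ k)"
proof (induction k)
  case 0
  show ?case by (simp add: homog_def mdeg_def)
next
  case (Suc k)
  then show ?case using homog_mult[OF assms Suc] by simp
qed

definition lefschetz_injective ::
    "('v::{finite,linorder}, 'a::comm_ring_1) mpoly \<Rightarrow> ('v, 'a) mpoly \<Rightarrow> nat \<Rightarrow> nat \<Rightarrow> bool" where
  "lefschetz_injective F l i j \<longleftrightarrow> (\<forall>g. homog i g \<and> l ^ j * g \<in> Ann F \<longrightarrow> g \<in> Ann F)"

definition lefschetz_surjective ::
    "('v::{finite,linorder}, 'a::comm_ring_1) mpoly \<Rightarrow> ('v, 'a) mpoly \<Rightarrow> nat \<Rightarrow> nat \<Rightarrow> bool" where
  "lefschetz_surjective F l i j \<longleftrightarrow>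
     (\<forall>h. homog (i + j) h \<longrightarrow> (\<exists>g. homog i g \<and> h - l ^ j * g \<in> Ann F))"

lemma strong_lefschetz_elem_iff:
  "strong_lefschetz_elem F l \<longleftrightarrow>
     homog 1 l \<and> (\<forall>i j. lefschetz_injective F l i j \<or> lefschetz_surjective F l i j)"
  by (simp add: strong_lefschetz_elem_def lefschetz_injective_def lefschetz_surjective_def)

lemma lefschetz_injective_act_power:
  fixes F l :: "('v::{finite,linorder}, 'a::comm_ring_1) mpoly"
  assumes "lefschetz_injective F l i (j + d)"
  shows "lefschetz_injective (act (l ^ d) F) l i j"
  unfolding lefschetz_injective_def
proof (intro allI impI)
  fix g assume g: "homog i g \<and> l ^ j * g \<in> Ann (act (l ^ d) F)"
  then have "l ^ (j + d) * g \<in> Ann F"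
    by (simp add: Ann_act power_add mult_ac)
  with g assms have "g \<in> Ann F"
    by (simp add: lefschetz_injective_def)
  then have "act (l ^ d * g) F = 0"
    by (simp add: Ann_def act_mult act_zero_right)
  then show "g \<in> Ann (act (l ^ d) F)"
    unfolding Ann_act by (simp add: Ann_def mult.commute)
qed

lemma lefschetz_surjective_act_power:
  fixes F l :: "('v::{finite,linorder}, 'a::comm_ring_1) mpoly"
  assumes "homog 1 l" "lefschetz_surjective F l i (j + d)"
  shows "lefschetz_surjective (act (l ^ d) F) l i j"
  unfolding lefschetz_surjective_def
proof (intro allI impI)
  fix h :: "('v, 'a) mpoly"
  assume "homog (i + j) h"
  from homog_mult[OF homog_power[OF assms(1)] this] have "homog (i + (j + d)) (l ^ d * h)"
    by (simp add: add_ac)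
  with assms(2) obtain g where g: "homog i g" "l ^ d * h - l ^ (j + d) * g \<in> Ann F"
    by (auto simp: lefschetz_surjective_def)
  have "(h - l ^ j * g) * l ^ d = l ^ d * h - l ^ (j + d) * g"
    by (simp add: power_add algebra_simps)
  with g show "\<exists>g. homog i g \<and> h - l ^ j * g \<in> Ann (act (l ^ d) F)"
    by (metis Ann_act)
qed

lemma strong_lefschetz_elem_act_power:
  fixes F l :: "('v::{finite,linorder}, 'a::comm_ring_1) mpoly"
  assumes "strong_lefschetz_elem F l"
  shows "strong_lefschetz_elem (act (l ^ d) F) l"
  using assms lefschetz_injective_act_power lefschetz_surjective_act_power
  by (meson strong_lefschetz_elem_iff)

theorem mainTheorem16:
  fixes F l :: "('v::{finite,linorder}, 'a::field_char_0) mpoly"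
    and e d :: nat
  assumes "homog e F"
    and "homog 1 l"
    and "strong_lefschetz_elem F l"
    and "d > 0"
  shows "has_SLP (act (l ^ d) F)"
  using strong_lefschetz_elem_act_power[OF assms(3)] by (auto simp: has_SLP_def)

end
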